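(* Let $d\ge 1$ and let $X$ be a minimal $\mathbb{Z}^d$-subshift of finite type. Then $\overline{D}_h(X)\le d-1$.
   Context: A subshift of $\mathcal A^{\mathbb Z^d}$ ($\mathcal A$ finite) is a closed shift-invariant set; it is of finite type if it is the set of configurations avoiding a finite set of forbidden patterns. $X$ is minimal if every pattern appearing in some configuration of $X$ appears in every configuration of $X$. $N_n(X)$ is the number of patterns on support $\llbracket 1,n\rrbracket^d$ appearing in $X$, and the upper entropy dimension is $\overline D_h(X)=\limsup_n \frac{\log_2\log_2 N_n(X)}{\log_2 n}$. *)

theory Defs
  imports Complex_Main "HOL-Library.Extended_Real" "HOL-Library.Liminf_Limsup"
begin

text \<open>Z^d is modelled as the function type 'd \<Rightarrow> int for a finite index type 'd,
  so d = CARD('d) \<ge> 1. The finite alphabet is a type 'a of class finite.\<close>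

type_synonym ('d, 'a) config = "('d \<Rightarrow> int) \<Rightarrow> 'a"
type_synonym ('d, 'a) pattern = "('d \<Rightarrow> int) \<rightharpoonup> 'a"

definition is_pattern :: "('d, 'a) pattern \<Rightarrow> bool" where
  "is_pattern P \<longleftrightarrow> finite (dom P)"

definition occurs_in :: "('d, 'a) pattern \<Rightarrow> ('d, 'a) config \<Rightarrow> bool" where
  "occurs_in P x \<longleftrightarrow> (\<exists>v. \<forall>p\<in>dom P. P p = Some (x (\<lambda>i. p i + v i)))"

definition appears_in :: "('d, 'a) pattern \<Rightarrow> ('d, 'a) config set \<Rightarrow> bool" where
  "appears_in P X \<longleftrightarrow> (\<exists>x\<in>X. occurs_in P x)"

definition is_SFT :: "('d, 'a) config set \<Rightarrow> bool" where
  "is_SFT X \<longleftrightarrow> (\<exists>F. finite F \<and> (\<forall>P\<in>F. is_pattern P) \<and>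
      X = {x. \<forall>P\<in>F. \<not> occurs_in P x})"

definition minimal_subshift :: "('d, 'a) config set \<Rightarrow> bool" where
  "minimal_subshift X \<longleftrightarrow>
     (\<forall>P. is_pattern P \<longrightarrow> appears_in P X \<longrightarrow> (\<forall>x\<in>X. occurs_in P x))"

definition cube :: "nat \<Rightarrow> ('d \<Rightarrow> int) set" where
  "cube n = {p. \<forall>i. 1 \<le> p i \<and> p i \<le> int n}"

definition N_count :: "('d, 'a) config set \<Rightarrow> nat \<Rightarrow> nat" where
  "N_count X n = card {P. dom P = cube n \<and> appears_in P X}"

definition ent_dim_term :: "('d, 'a) config set \<Rightarrow> nat \<Rightarrow> ereal" where
  "ent_dim_term X n = (if N_count X n \<le> 1 then -\<infinity>
      else ereal (log 2 (log 2 (real (N_count X n))) / log 2 (real n)))"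

definition upper_entropy_dim :: "('d, 'a) config set \<Rightarrow> ereal" where
  "upper_entropy_dim X = limsup (ent_dim_term X)"

end

theory Submission
  imports Defs "HOL-Library.List_Lexorder" "HOL-Library.FuncSet"
    "HOL-Library.Diagonal_Subsequence" "HOL-Library.Cardinality"
    "HOL-Real_Asymp.Real_Asymp"
begin

text \<open>Let every forbidden pattern fit into a box of radius \<open>M\<close>. The heart of the proof is
  rigidity: two points \<open>x \<noteq> z\<close> of a minimal SFT cannot differ on a finite set \<open>D\<close> only.
  Otherwise let \<open>d\<^sub>0\<close> be the lexicographically least site of \<open>D\<close>, say with \<open>z d\<^sub>0 < x d\<^sub>0\<close>,
  and let \<open>B\<close> be the \<open>2M\<close>-neighbourhood of \<open>D\<close>. In the box of radius \<open>n\<close> pick \<open>y \<in> X\<close>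
  whose restriction to the box is lexicographically least. Then \<open>x|B\<close> does not occur inside
  that box in \<open>y\<close>: replacing such a copy by \<open>z|B\<close> yields a point of \<open>X\<close> that is
  lexicographically smaller. A limit point of these \<open>y\<close> lies in \<open>X\<close>, hence contains \<open>x|B\<close> by
  minimality, and so do the boxes of large radius -- a contradiction.

  By rigidity, a pattern of \<open>X\<close> on \<open>[1,n]\<^sup>d\<close> is determined by its values on the border strip of
  width \<open>2M\<close>, which has \<open>O(n\<^sup>d\<^sup>-\<^sup>1)\<close> sites. So \<open>log N\<^sub>n = O(n\<^sup>d\<^sup>-\<^sup>1)\<close>.\<close>

section \<open>Boxes in the lattice\<close>

definition lattice_box :: "('d \<Rightarrow> int) \<Rightarrow> int \<Rightarrow> ('d \<Rightarrow> int) set" where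
  "lattice_box q r = {p. \<forall>i. \<bar>p i - q i\<bar> \<le> r}"

lemma finite_lattice_box: "finite (lattice_box q r :: ('d::finite \<Rightarrow> int) set)"
proof (rule finite_subset)
  show "lattice_box q r \<subseteq> PiE UNIV (\<lambda>i. {q i - r..q i + r})"
  proof
    fix p assume p: "p \<in> lattice_box q r"
    have "p i \<in> {q i - r..q i + r}" for i
      using p unfolding lattice_box_def by (auto simp: abs_le_iff dest: spec[where x = i])
    then show "p \<in> PiE UNIV (\<lambda>i. {q i - r..q i + r})" by (simp add: PiE_iff)
  qed
qed (auto intro: finite_PiE)

lemma lattice_box_mono: "r \<le> s \<Longrightarrow> lattice_box q r \<subseteq> lattice_box q s"
  unfolding lattice_box_def by (auto dest: order.trans)

lemma finite_subset_lattice_box: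
  fixes S :: "('d::finite \<Rightarrow> int) set"
  assumes "finite S"
  obtains N :: nat where "S \<subseteq> lattice_box (\<lambda>_. 0) (int N)"
proof
  let ?V = "(\<lambda>(p, i). \<bar>p i\<bar>) ` (S \<times> UNIV)"
  have "\<bar>p i\<bar> \<le> int (nat (Max (insert 0 ?V)))" if "p \<in> S" for p i
  proof -
    have "\<bar>p i\<bar> \<le> Max (insert 0 ?V)" using assms that by (intro Max_ge) auto
    then show ?thesis by (simp; arith)
  qed
  then show "S \<subseteq> lattice_box (\<lambda>_. 0) (int (nat (Max (insert 0 ?V))))"
    by (auto simp: lattice_box_def)
qed

lemma cube_subset_lattice_box: "cube n \<subseteq> lattice_box (\<lambda>_. 0) (int n)"
proof
  fix p assume p: "p \<in> cube n"
  have "\<bar>p i\<bar> \<le> int n" for i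
  proof -
    from p have "1 \<le> p i" "p i \<le> int n" by (auto simp: cube_def)
    then show ?thesis by arith
  qed
  then show "p \<in> lattice_box (\<lambda>_. 0) (int n)" by (simp add: lattice_box_def)
qed

lemma finite_cube: "finite (cube n :: ('d::finite \<Rightarrow> int) set)"
  using finite_subset[OF cube_subset_lattice_box finite_lattice_box] .

definition cube_border :: "nat \<Rightarrow> int \<Rightarrow> ('d \<Rightarrow> int) set" where
  "cube_border n K = {p \<in> cube n. \<exists>i. p i \<le> K \<or> int n - K < p i}"

lemma card_slab:
  fixes i :: "'d::finite"
  assumes "finite S"
  shows "card (PiE UNIV (\<lambda>j. if j = i then S else {1..int n}))
    = card S * n ^ (CARD('d) - 1)"
proof -
  have "card (PiE UNIV (\<lambda>j. if j = i then S else {1..int n}))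
      = (\<Prod>j\<in>UNIV. if j = i then card S else n)"
    by (simp add: card_PiE if_distrib cong: if_cong)
  also have "\<dots> = card S * (\<Prod>j\<in>UNIV - {i}. if j = i then card S else n)"
    by (subst prod.remove[of _ i]) simp_all
  also have "(\<Prod>j\<in>UNIV - {i}. if j = i then card S else n) = (\<Prod>j\<in>UNIV - {i}. n)"
    by (rule prod.cong) auto
  finally show ?thesis by (simp add: card_Diff_singleton)
qed

lemma card_cube_border_le:
  assumes "0 \<le> K"
  shows "card (cube_border n K :: ('d::finite \<Rightarrow> int) set)
    \<le> 2 * CARD('d) * nat K * n ^ (CARD('d) - 1)"
proof -
  define Lo where "Lo i = PiE UNIV (\<lambda>j. if j = i then {1..K} else {1..int n})" for i :: 'd
  define Hi where "Hi i = PiE UNIV (\<lambda>j. if j = i then {int n - K + 1..int n} else {1..int n})"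
    for i :: 'd
  have cover: "cube_border n K \<subseteq> (\<Union>i. Lo i \<union> Hi i)"
  proof
    fix p :: "'d \<Rightarrow> int" assume "p \<in> cube_border n K"
    then obtain i where "\<forall>j. 1 \<le> p j \<and> p j \<le> int n" "p i \<le> K \<or> int n - K < p i"
      by (auto simp: cube_border_def cube_def)
    then have "p \<in> Lo i \<union> Hi i"
      unfolding Lo_def Hi_def by (cases "p i \<le> K") (auto split: if_split_asm)
    then show "p \<in> (\<Union>i. Lo i \<union> Hi i)" by blast
  qed
  have "card (cube_border n K :: ('d \<Rightarrow> int) set) \<le> card (\<Union>i. Lo i \<union> Hi i)"
    by (rule card_mono[OF _ cover]) (auto simp: Lo_def Hi_def intro!: finite_PiE)
  also have "\<dots> \<le> (\<Sum>i\<in>UNIV. card (Lo i \<union> Hi i))"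
    by (rule card_UN_le) simp
  also have "\<dots> \<le> (\<Sum>i\<in>(UNIV :: 'd set). 2 * nat K * n ^ (CARD('d) - 1))"
  proof (rule sum_mono)
    fix i
    have "card (Lo i) = nat K * n ^ (CARD('d) - 1)" "card (Hi i) = nat K * n ^ (CARD('d) - 1)"
      unfolding Lo_def Hi_def by (subst card_slab; simp)+
    then show "card (Lo i \<union> Hi i) \<le> 2 * nat K * n ^ (CARD('d) - 1)"
      using card_Un_le[of "Lo i" "Hi i"] by simp
  qed
  finally show ?thesis by (simp add: mult.assoc)
qed

section \<open>Lexicographic order on configurations\<close>

definition lex_less_on ::
  "('d \<Rightarrow> int) set \<Rightarrow> 'd list \<Rightarrow> (('d \<Rightarrow> int) \<Rightarrow> 'a::countable) \<Rightarrow> (('d \<Rightarrow> int) \<Rightarrow> 'a) \<Rightarrow> bool"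
  where "lex_less_on R es a b \<longleftrightarrow>
    (\<exists>q\<in>R. to_nat (a q) < to_nat (b q) \<and> (\<forall>p\<in>R. map p es < map q es \<longrightarrow> a p = b p))"

lemma map_enumeration_eq_iff: "set es = UNIV \<Longrightarrow> map p es = map q es \<longleftrightarrow> p = q"
  by (auto simp: map_eq_conv)

lemma map_translate_less_iff:
  "map (\<lambda>i. p i + (v i :: int)) es < map (\<lambda>i. q i + v i) es \<longleftrightarrow> map p es < map q es"
  by (induction es) auto

lemma lex_less_on_trans:
  assumes es: "set es = UNIV" and ab: "lex_less_on R es a b" and bc: "lex_less_on R es b c"
  shows "lex_less_on R es a c"
proof -
  obtain q1 where q1: "q1 \<in> R" "to_nat (a q1) < to_nat (b q1)"
    "\<forall>p\<in>R. map p es < map q1 es \<longrightarrow> a p = b p"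
    using ab by (auto simp: lex_less_on_def)
  obtain q2 where q2: "q2 \<in> R" "to_nat (b q2) < to_nat (c q2)"
    "\<forall>p\<in>R. map p es < map q2 es \<longrightarrow> b p = c p"
    using bc by (auto simp: lex_less_on_def)
  consider "map q1 es < map q2 es" | "q1 = q2" | "map q2 es < map q1 es"
    using less_linear[of "map q1 es" "map q2 es"] map_enumeration_eq_iff[OF es] by blast
  then show ?thesis
  proof cases
    case 1
    with q1 q2 show ?thesis
      unfolding lex_less_on_def by (intro bexI[OF _ q1(1)]) (auto dest: order.strict_trans)
  next
    case 2
    with q1 q2 show ?thesis
      unfolding lex_less_on_def by (intro bexI[OF _ q1(1)]) auto
  next
    case 3
    with q1 q2 show ?thesis
      unfolding lex_less_on_def by (intro bexI[OF _ q2(1)]) (auto dest: order.strict_trans)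
  qed
qed

lemma lex_less_on_irrefl: "\<not> lex_less_on R es a a"
  by (simp add: lex_less_on_def)

lemma lex_less_on_restrict:
  "lex_less_on R es (restrict a R) (restrict b R) \<longleftrightarrow> lex_less_on R es a b"
  by (simp add: lex_less_on_def)

lemma ex_lex_minimal_on:
  fixes S :: "(('d \<Rightarrow> int) \<Rightarrow> 'a::finite) set"
  assumes es: "set es = UNIV" and "finite R" and "x \<in> S"
  shows "\<exists>y\<in>S. \<forall>y'\<in>S. \<not> lex_less_on R es y' y"
proof -
  let ?T = "(\<lambda>y. restrict y R) ` S"
  let ?r = "{(a, b). a \<in> ?T \<and> b \<in> ?T \<and> lex_less_on R es a b}"
  have "finite (PiE R (\<lambda>_. UNIV :: 'a set))" using \<open>finite R\<close> by (simp add: finite_PiE)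
  then have "finite ?T" by (rule finite_subset[rotated]) auto
  then have "finite (?T \<times> ?T)" by simp
  then have "finite ?r" by (rule finite_subset[rotated]) auto
  moreover have "trans ?r"
    by (auto intro!: transI intro: lex_less_on_trans[OF es])
  then have "acyclic ?r"
    unfolding acyclic_def trancl_id[OF \<open>trans ?r\<close>] using lex_less_on_irrefl by blast
  ultimately have "wf ?r" by (rule finite_acyclic_wf)
  then obtain a where "a \<in> ?T" and a_min: "\<And>b. (b, a) \<in> ?r \<Longrightarrow> b \<notin> ?T"
    using wfE_min[of ?r "restrict x R" ?T] \<open>x \<in> S\<close> by blast
  then obtain y where "y \<in> S" "a = restrict y R" by blast
  have "\<not> lex_less_on R es y' y" if "y' \<in> S" for y'
  proof
    assume "lex_less_on R es y' y"
    with \<open>a \<in> ?T\<close> \<open>a = restrict y R\<close> imageI[OF that, of "\<lambda>y. restrict y R"]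
    have "(restrict y' R, a) \<in> ?r" by (simp add: lex_less_on_restrict)
    with a_min imageI[OF that, of "\<lambda>y. restrict y R"] show False by blast
  qed
  with \<open>y \<in> S\<close> show ?thesis by blast
qed

lemma ex_lex_least:
  fixes D :: "('d \<Rightarrow> int) set"
  assumes es: "set es = UNIV" and "finite D" and "D \<noteq> {}"
  obtains d0 where "d0 \<in> D" "\<And>q. q \<in> D \<Longrightarrow> q \<noteq> d0 \<Longrightarrow> map d0 es < map q es"
proof -
  have "Min ((\<lambda>p. map p es) ` D) \<in> (\<lambda>p. map p es) ` D"
    using assms by (intro Min_in) auto
  then obtain d0 where d0: "d0 \<in> D" "map d0 es = Min ((\<lambda>p. map p es) ` D)" by auto
  have "map d0 es < map q es" if "q \<in> D" "q \<noteq> d0" for q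
  proof -
    have "map d0 es \<le> map q es"
      unfolding d0(2) using that \<open>finite D\<close> by (intro Min_le) auto
    moreover have "map d0 es \<noteq> map q es" using map_enumeration_eq_iff[OF es, of d0 q] that(2) by simp
    ultimately show ?thesis by (simp add: order_less_le)
  qed
  with d0(1) show ?thesis by (rule that)
qed

section \<open>Compactness and minimality\<close>

lemma ex_pointwise_convergent_subseq:
  fixes ys :: "nat \<Rightarrow> ('d::finite \<Rightarrow> int) \<Rightarrow> 'a::finite"
  obtains r l where "strict_mono r"
    "\<And>T. finite T \<Longrightarrow> \<forall>\<^sub>F m in sequentially. \<forall>p\<in>T. ys (r m) p = l p"
proof -
  let ?P = "\<lambda>k (s :: nat \<Rightarrow> nat). \<exists>a. \<forall>j. ys (s j) (from_nat k) = a"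
  interpret S: subseqs ?P
  proof
    fix k and s :: "nat \<Rightarrow> nat"
    have "\<exists>a. infinite {j. ys (s j) (from_nat k) = a}"
    proof (rule ccontr)
      assume "\<nexists>a. infinite {j. ys (s j) (from_nat k) = a}"
      then have "finite (\<Union>a\<in>(UNIV :: 'a set). {j. ys (s j) (from_nat k) = a})" by auto
      moreover have "(\<Union>a\<in>(UNIV :: 'a set). {j. ys (s j) (from_nat k) = a}) = UNIV" by auto
      ultimately show False by simp
    qed
    then obtain a where "infinite {j. ys (s j) (from_nat k) = a}" ..
    from infinite_enumerate[OF this] obtain r' :: "nat \<Rightarrow> nat"
      where "strict_mono r'" "\<forall>n. r' n \<in> {j. ys (s j) (from_nat k) = a}"
      by blast
    then show "\<exists>r'. strict_mono r' \<and> ?P k (s \<circ> r')" by auto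
  qed
  define l where "l p = ys (S.diagseq (Suc (to_nat p))) p" for p
  have "ys (S.diagseq m) p = l p" if "Suc (to_nat p) \<le> m" for m p
  proof -
    obtain a where a: "\<forall>j. ys ((S.diagseq \<circ> (+) (Suc (to_nat p))) j) (from_nat (to_nat p)) = a"
      using S.diagseq_holds[of "to_nat p"] by fastforce
    show ?thesis
      using a[rule_format, of "m - Suc (to_nat p)"] a[rule_format, of 0] that
      by (simp add: l_def)
  qed
  then have "\<forall>\<^sub>F m in sequentially. \<forall>p\<in>T. ys (S.diagseq m) p = l p" if "finite T" for T
    using that by (intro eventually_ball_finite ballI) (auto intro: eventually_sequentiallyI)
  with S.subseq_diagseq show ?thesis by (rule that)
qed

lemma minimal_subshift_occurs:
  assumes "minimal_subshift X" and "x \<in> X" and "y \<in> X" and "finite B"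
  shows "\<exists>v. \<forall>p\<in>B. y (\<lambda>i. p i + v i) = x p"
proof -
  let ?Q = "(\<lambda>p. Some (x p)) |` B"
  have "occurs_in ?Q x"
    unfolding occurs_in_def by (intro exI[of _ "\<lambda>_. 0"]) simp
  then have "appears_in ?Q X" using \<open>x \<in> X\<close> by (auto simp: appears_in_def)
  moreover have "is_pattern ?Q" using \<open>finite B\<close> by (simp add: is_pattern_def)
  ultimately have "occurs_in ?Q y"
    using assms(1,3) unfolding minimal_subshift_def by blast
  then show ?thesis by (auto simp: occurs_in_def)
qed

section \<open>Subshifts of finite type\<close>

locale sft_radius =
  fixes F :: "('d::finite, 'a::finite) pattern set" and M :: int and X :: "('d, 'a) config set"
  assumes forbidden_in_box: "\<And>P. P \<in> F \<Longrightarrow> dom P \<subseteq> lattice_box (\<lambda>_. 0) M"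
    and radius_nonneg: "0 \<le> M"
    and X_eq: "X = {x. \<forall>P\<in>F. \<not> occurs_in P x}"
begin

lemma mem_if_locally_mem:
  assumes "\<And>u. \<exists>w\<in>X. \<forall>p\<in>lattice_box u M. z p = w p"
  shows "z \<in> X"
  unfolding X_eq
proof (intro CollectI ballI notI)
  fix P assume P: "P \<in> F" and "occurs_in P z"
  then obtain v where v: "\<forall>p\<in>dom P. P p = Some (z (\<lambda>i. p i + v i))"
    by (auto simp: occurs_in_def)
  obtain w where w: "w \<in> X" "\<forall>p\<in>lattice_box v M. z p = w p"
    using assms by blast
  have "(\<lambda>i. p i + v i) \<in> lattice_box v M" if "p \<in> dom P" for p
    using forbidden_in_box[OF P] that by (auto simp: lattice_box_def)
  with v w(2) have "occurs_in P w"
    unfolding occurs_in_def by (intro exI[of _ v]) auto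
  with w(1) P show False by (auto simp: X_eq)
qed

lemma shift_mem:
  assumes "y \<in> X"
  shows "(\<lambda>p. y (\<lambda>i. p i + v i)) \<in> X"
  unfolding X_eq
proof (intro CollectI ballI notI)
  fix P assume P: "P \<in> F" and "occurs_in P (\<lambda>p. y (\<lambda>i. p i + v i))"
  then obtain u where "\<forall>p\<in>dom P. P p = Some (y (\<lambda>i. p i + (u i + v i)))"
    by (auto simp: occurs_in_def add.assoc)
  then have "occurs_in P y"
    unfolding occurs_in_def by (intro exI[of _ "\<lambda>i. u i + v i"]) simp
  with assms P show False by (auto simp: X_eq)
qed

lemma limit_mem:
  assumes "\<And>m. ys m \<in> X" and "\<And>T. finite T \<Longrightarrow> \<forall>\<^sub>F m in sequentially. \<forall>p\<in>T. ys m p = l p"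
  shows "l \<in> X"
  unfolding X_eq
proof (intro CollectI ballI notI)
  fix P assume P: "P \<in> F" and "occurs_in P l"
  then obtain v where v: "\<forall>p\<in>dom P. P p = Some (l (\<lambda>i. p i + v i))"
    by (auto simp: occurs_in_def)
  have "finite ((\<lambda>p i. p i + v i) ` dom P)"
    using finite_subset[OF forbidden_in_box[OF P] finite_lattice_box] by simp
  from eventually_happens'[OF _ assms(2)[OF this]]
  obtain m where "\<forall>q\<in>(\<lambda>p i. p i + v i) ` dom P. ys m q = l q"
    by auto
  with v have "occurs_in P (ys m)" unfolding occurs_in_def by (intro exI[of _ v]) auto
  with assms(1)[of m] P show False by (auto simp: X_eq)
qed

text \<open>A copy of \<open>x\<close> on the \<open>2M\<close>-neighbourhood of \<open>D\<close>, found in \<open>y\<close> at offset \<open>v\<close>, may be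
  overwritten by \<open>z\<close> on \<open>D\<close>: every \<open>M\<close>-window of the result sees either \<open>y\<close> or shifted \<open>z\<close>.\<close>

lemma transplant_mem:
  assumes z: "z \<in> X" and y: "y \<in> X"
    and xz: "\<And>p. p \<notin> D \<Longrightarrow> x p = z p"
    and copy: "\<forall>p\<in>(\<Union>q\<in>D. lattice_box q (2 * M)). y (\<lambda>i. p i + v i) = x p"
  shows "(\<lambda>p. if (\<lambda>i. p i - v i) \<in> D then z (\<lambda>i. p i - v i) else y p) \<in> X"
    (is "?y' \<in> X")
proof (rule mem_if_locally_mem)
  fix u
  show "\<exists>w\<in>X. \<forall>p\<in>lattice_box u M. ?y' p = w p"
  proof (cases "\<exists>r\<in>lattice_box u M. (\<lambda>i. r i - v i) \<in> D")
    case True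
    then obtain r where r: "r \<in> lattice_box u M" "(\<lambda>i. r i - v i) \<in> D" by blast
    have "?y' p = z (\<lambda>i. p i + (- v) i)" if p: "p \<in> lattice_box u M" for p
    proof -
      have "\<bar>p i - v i - (r i - v i)\<bar> \<le> 2 * M" for i
      proof -
        have "\<bar>p i - u i\<bar> \<le> M" "\<bar>r i - u i\<bar> \<le> M"
          using p r(1) by (auto simp: lattice_box_def)
        then show ?thesis by arith
      qed
      then have "(\<lambda>i. p i - v i) \<in> lattice_box (\<lambda>i. r i - v i) (2 * M)"
        by (simp add: lattice_box_def)
      with r(2) have "(\<lambda>i. p i - v i) \<in> (\<Union>q\<in>D. lattice_box q (2 * M))" by blast
      from copy[rule_format, OF this] have "y p = x (\<lambda>i. p i - v i)"
        by simp
      then show ?thesis using xz by auto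
    qed
    then show ?thesis by (intro bexI[OF _ shift_mem[OF z, of "- v"]]) auto
  next
    case False
    then show ?thesis using y by auto
  qed
qed

end

locale minimal_sft_radius = sft_radius F M X
  for F :: "('d::finite, 'a::finite) pattern set" and M X +
  assumes minimal: "minimal_subshift X"
begin

lemma ex_mem_avoiding_copy:
  fixes x z :: "('d, 'a) config" and es :: "'d list"
  assumes x: "x \<in> X" and z: "z \<in> X" and D: "D = {p. x p \<noteq> z p}"
    and es: "set es = UNIV" and d0: "d0 \<in> D"
    and d0_least: "\<And>q. q \<in> D \<Longrightarrow> q \<noteq> d0 \<Longrightarrow> map d0 es < map q es"
    and less: "to_nat (z d0) < to_nat (x d0)"
  defines "B \<equiv> \<Union>q\<in>D. lattice_box q (2 * M)"
  shows "\<exists>y\<in>X. \<forall>v. (\<forall>p\<in>B. (\<lambda>i. p i + v i) \<in> lattice_box (\<lambda>_. 0) (int n))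
    \<longrightarrow> \<not> (\<forall>p\<in>B. y (\<lambda>i. p i + v i) = x p)"
proof -
  define R where "R = (lattice_box (\<lambda>_. 0) (int n) :: ('d \<Rightarrow> int) set)"
  have "finite R" by (simp add: R_def finite_lattice_box)
  obtain y where y: "y \<in> X" and y_least: "\<And>y'. y' \<in> X \<Longrightarrow> \<not> lex_less_on R es y' y"
    using ex_lex_minimal_on[OF es \<open>finite R\<close> x] by blast
  show ?thesis
    unfolding R_def[symmetric]
  proof (intro bexI[OF _ y] allI impI notI)
    fix v assume in_R: "\<forall>p\<in>B. (\<lambda>i. p i + v i) \<in> R"
      and copy: "\<forall>p\<in>B. y (\<lambda>i. p i + v i) = x p"
    define y' where "y' = (\<lambda>p. if (\<lambda>i. p i - v i) \<in> D then z (\<lambda>i. p i - v i) else y p)"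
    have "y' \<in> X" unfolding y'_def
      by (rule transplant_mem[OF z y _ copy[unfolded B_def]]) (simp add: D)
    define q where "q = (\<lambda>i. d0 i + v i)"
    have "d0 \<in> lattice_box d0 (2 * M)" using radius_nonneg by (simp add: lattice_box_def)
    with d0 have "d0 \<in> B" by (auto simp: B_def)
    have "lex_less_on R es y' y"
      unfolding lex_less_on_def
    proof (intro bexI conjI ballI impI)
      show "q \<in> R" using in_R \<open>d0 \<in> B\<close> by (simp add: R_def q_def)
      show "to_nat (y' q) < to_nat (y q)"
        using copy \<open>d0 \<in> B\<close> d0 less by (simp add: y'_def q_def)
    next
      fix p assume "map p es < map q es"
      then have "map (\<lambda>i. p i - v i) es < map d0 es"
        using map_translate_less_iff[of "\<lambda>i. p i - v i" v es d0] by (simp add: q_def)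
      then have "(\<lambda>i. p i - v i) \<notin> D"
        using d0_least[of "\<lambda>i. p i - v i"]
        by (cases "(\<lambda>i. p i - v i) = d0") (auto dest: less_asym)
      then show "y' p = y p" by (simp add: y'_def)
    qed
    with y_least[OF \<open>y' \<in> X\<close>] show False ..
  qed
qed

lemma no_lex_decreasing_finite_perturbation:
  fixes x z :: "('d, 'a) config" and es :: "'d list"
  assumes x: "x \<in> X" and z: "z \<in> X" and D: "D = {p. x p \<noteq> z p}" and "finite D"
    and es: "set es = UNIV" and d0: "d0 \<in> D"
    and d0_least: "\<And>q. q \<in> D \<Longrightarrow> q \<noteq> d0 \<Longrightarrow> map d0 es < map q es"
    and less: "to_nat (z d0) < to_nat (x d0)"
  shows False
proof -
  define B where "B = (\<Union>q\<in>D. lattice_box q (2 * M))"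
  have "finite B" using \<open>finite D\<close> by (simp add: B_def finite_lattice_box)
  have "\<forall>n. \<exists>y\<in>X. \<forall>v. (\<forall>p\<in>B. (\<lambda>i. p i + v i) \<in> lattice_box (\<lambda>_. 0) (int n))
      \<longrightarrow> \<not> (\<forall>p\<in>B. y (\<lambda>i. p i + v i) = x p)"
    using ex_mem_avoiding_copy[OF x z D es d0 d0_least less] by (simp add: B_def)
  then obtain ys where ys: "\<And>n. ys n \<in> X"
    and avoid: "\<And>n v. \<forall>p\<in>B. (\<lambda>i. p i + v i) \<in> lattice_box (\<lambda>_. 0) (int n)
      \<Longrightarrow> \<not> (\<forall>p\<in>B. ys n (\<lambda>i. p i + v i) = x p)"
    by metis
  obtain r l where r: "strict_mono r"
    and conv: "\<And>T. finite T \<Longrightarrow> \<forall>\<^sub>F m in sequentially. \<forall>p\<in>T. ys (r m) p = l p"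
    using ex_pointwise_convergent_subseq[of ys] by blast
  have "l \<in> X" using ys conv by (rule limit_mem)
  then obtain v where copy: "\<forall>p\<in>B. l (\<lambda>i. p i + v i) = x p"
    using minimal_subshift_occurs[OF minimal x _ \<open>finite B\<close>] by blast
  let ?S = "(\<lambda>p i. p i + v i) ` B"
  obtain N :: nat where N: "?S \<subseteq> lattice_box (\<lambda>_. 0) (int N)"
    using finite_subset_lattice_box[of ?S] \<open>finite B\<close> by blast
  from eventually_happens'[OF _ eventually_conj[OF conv[of ?S] eventually_ge_at_top[of N]]]
  obtain m where m: "\<forall>q\<in>?S. ys (r m) q = l q" "N \<le> m"
    using \<open>finite B\<close> by auto
  have "int N \<le> int (r m)" using seq_suble[OF r, of m] m(2) by simp
  then have "\<forall>p\<in>B. (\<lambda>i. p i + v i) \<in> lattice_box (\<lambda>_. 0) (int (r m))"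
    using N lattice_box_mono by blast
  moreover have "\<forall>p\<in>B. ys (r m) (\<lambda>i. p i + v i) = x p" using m(1) copy by auto
  ultimately show False using avoid by blast
qed

theorem eq_if_finite_difference:
  assumes x: "x \<in> X" and z: "z \<in> X" and fin: "finite {p. x p \<noteq> z p}"
  shows "x = z"
proof (rule ccontr)
  assume "x \<noteq> z"
  define D where "D = {p. x p \<noteq> z p}"
  have "finite D" "D \<noteq> {}" using fin \<open>x \<noteq> z\<close> by (auto simp: D_def)
  obtain es :: "'d list" where es: "set es = UNIV"
    using finite_list[of "UNIV :: 'd set"] by auto
  obtain d0 where d0: "d0 \<in> D" and least: "\<And>q. q \<in> D \<Longrightarrow> q \<noteq> d0 \<Longrightarrow> map d0 es < map q es"
    using ex_lex_least[OF es \<open>finite D\<close> \<open>D \<noteq> {}\<close>] by blast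
  have "to_nat (x d0) \<noteq> to_nat (z d0)" using d0 by (simp add: D_def)
  then consider "to_nat (z d0) < to_nat (x d0)" | "to_nat (x d0) < to_nat (z d0)" by linarith
  then show False
  proof cases
    case 1
    from no_lex_decreasing_finite_perturbation[OF x z D_def \<open>finite D\<close> es d0 least 1]
    show False .
  next
    case 2
    have "D = {p. z p \<noteq> x p}" by (auto simp: D_def)
    from no_lex_decreasing_finite_perturbation[OF z x this \<open>finite D\<close> es d0 least 2]
    show False .
  qed
qed

lemma eq_on_cube_if_eq_on_border:
  assumes y: "y \<in> X" and y': "y' \<in> X" and agree: "\<forall>p\<in>cube_border n (2 * M). y p = y' p"
  shows "\<forall>p\<in>cube n. y p = y' p"
proof -
  define z where "z = (\<lambda>p. if p \<in> cube n then y' p else y p)"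
  have "z \<in> X"
  proof (rule mem_if_locally_mem)
    fix u
    show "\<exists>w\<in>X. \<forall>p\<in>lattice_box u M. z p = w p"
    proof (cases "lattice_box u M \<subseteq> cube n")
      case True
      then show ?thesis by (intro bexI[OF _ y']) (auto simp: z_def)
    next
      case False
      then obtain r where r: "r \<in> lattice_box u M" "r \<notin> cube n" by blast
      then obtain i where "r i < 1 \<or> int n < r i" by (auto simp: cube_def not_le)
      have "z p = y p" if p: "p \<in> lattice_box u M" for p
      proof (cases "p \<in> cube n")
        case True
        have "\<bar>p i - u i\<bar> \<le> M" "\<bar>r i - u i\<bar> \<le> M" "1 \<le> p i" "p i \<le> int n"
          using p r(1) True by (auto simp: lattice_box_def cube_def)
        then have "p i \<le> 2 * M \<or> int n - 2 * M < p i" using \<open>r i < 1 \<or> int n < r i\<close> by arith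
        then show ?thesis using agree True by (auto simp: z_def cube_border_def)
      qed (simp add: z_def)
      then show ?thesis using y by blast
    qed
  qed
  moreover have "finite {p. z p \<noteq> y p}"
    by (rule finite_subset[OF _ finite_cube]) (auto simp: z_def)
  ultimately have "z = y" using eq_if_finite_difference y by blast
  then show ?thesis by (metis z_def)
qed

lemma N_count_le_card_border:
  "N_count X n \<le> CARD('a) ^ card (cube_border n (2 * M) :: ('d \<Rightarrow> int) set)"
proof -
  define Bd :: "('d \<Rightarrow> int) set" where "Bd = cube_border n (2 * M)"
  define Pats where "Pats = {P. dom P = cube n \<and> appears_in P X}"
  have rep: "\<exists>w\<in>X. \<forall>p\<in>cube n. P p = Some (w p)" if "P \<in> Pats" for P
  proof -
    from that obtain y v where "y \<in> X" "dom P = cube n"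
      and "\<forall>p\<in>dom P. P p = Some (y (\<lambda>i. p i + v i))"
      unfolding Pats_def appears_in_def occurs_in_def by blast
    with shift_mem[of y v] show ?thesis by auto
  qed
  have "inj_on (\<lambda>P. restrict (\<lambda>p. the (P p)) Bd) Pats"
  proof (rule inj_onI)
    fix P1 P2 assume P1: "P1 \<in> Pats" and P2: "P2 \<in> Pats"
      and eq: "restrict (\<lambda>p. the (P1 p)) Bd = restrict (\<lambda>p. the (P2 p)) Bd"
    obtain w1 where w1: "w1 \<in> X" "\<forall>p\<in>cube n. P1 p = Some (w1 p)" using rep[OF P1] by blast
    obtain w2 where w2: "w2 \<in> X" "\<forall>p\<in>cube n. P2 p = Some (w2 p)" using rep[OF P2] by blast
    have "w1 p = w2 p" if "p \<in> Bd" for p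
    proof -
      have "p \<in> cube n" using that by (simp add: Bd_def cube_border_def)
      with w1(2) w2(2) fun_cong[OF eq, of p] that show ?thesis by simp
    qed
    then have "\<forall>p\<in>cube n. w1 p = w2 p"
      by (intro eq_on_cube_if_eq_on_border[OF w1(1) w2(1)]) (simp add: Bd_def)
    moreover have "P1 p = None" "P2 p = None" if "p \<notin> cube n" for p
      using P1 P2 that by (auto simp: Pats_def)
    ultimately show "P1 = P2" using w1(2) w2(2) by (metis ext)
  qed
  moreover have "(\<lambda>P. restrict (\<lambda>p. the (P p)) Bd) ` Pats \<subseteq> PiE Bd (\<lambda>_. UNIV)" by auto
  moreover have "finite Bd"
    by (rule finite_subset[OF _ finite_cube]) (auto simp: Bd_def cube_border_def)
  ultimately have "card Pats \<le> card (PiE Bd (\<lambda>_. UNIV :: 'a set))"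
    by (intro card_inj_on_le) (auto intro: finite_PiE)
  also have "\<dots> = CARD('a) ^ card Bd" by (simp add: card_PiE \<open>finite Bd\<close>)
  finally show ?thesis by (simp add: N_count_def Pats_def Bd_def)
qed

lemma N_count_le_exp:
  "N_count X n \<le> CARD('a) ^ (2 * CARD('d) * nat (2 * M) * n ^ (CARD('d) - 1))"
proof -
  have "N_count X n \<le> CARD('a) ^ card (cube_border n (2 * M) :: ('d \<Rightarrow> int) set)"
    by (rule N_count_le_card_border)
  also have "\<dots> \<le> CARD('a) ^ (2 * CARD('d) * nat (2 * M) * n ^ (CARD('d) - 1))"
  proof (rule power_increasing)
    show "card (cube_border n (2 * M) :: ('d \<Rightarrow> int) set)
        \<le> 2 * CARD('d) * nat (2 * M) * n ^ (CARD('d) - 1)"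
      using card_cube_border_le[of "2 * M" n] radius_nonneg by simp
  qed (simp add: Suc_le_eq)
  finally show ?thesis .
qed

end

section \<open>Entropy dimension\<close>

lemma log_log_div_log_le:
  fixes N C n :: real
  assumes "2 \<le> N" and "log 2 N \<le> C * n ^ e" and "1 \<le> C" and "1 < n"
  shows "log 2 (log 2 N) / log 2 n \<le> log 2 C / log 2 n + e"
proof -
  have "0 < log 2 n" using assms by simp
  have "log 2 (log 2 N) \<le> log 2 (C * n ^ e)"
    using assms by (intro log_mono) auto
  also have "\<dots> = log 2 C + e * log 2 n"
    using assms by (simp add: log_mult log_nat_power)
  finally have "log 2 (log 2 N) / log 2 n \<le> (log 2 C + e * log 2 n) / log 2 n"
    using \<open>0 < log 2 n\<close> by (intro divide_right_mono) auto
  also have "\<dots> = log 2 C / log 2 n + e"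
    using \<open>0 < log 2 n\<close> by (simp add: add_divide_distrib)
  finally show ?thesis .
qed

lemma upper_entropy_dim_le:
  fixes X :: "('d, 'a) config set"
  assumes N_le: "\<And>n. N_count X n \<le> A ^ (K * n ^ e)"
  shows "upper_entropy_dim X \<le> ereal (real e)"
proof -
  define C where "C = max 1 (real K * log 2 (real A))"
  have "ent_dim_term X n \<le> ereal (log 2 C / log 2 (real n) + real e)" if "2 \<le> n" for n
  proof (cases "N_count X n \<le> 1")
    case True
    then show ?thesis by (simp add: ent_dim_term_def)
  next
    case False
    define N where "N = real (N_count X n)"
    have "2 \<le> N" using False by (simp add: N_def)
    have "N \<le> real A ^ (K * n ^ e)"
      unfolding N_def by (metis N_le of_nat_le_iff of_nat_power)
    moreover from this \<open>2 \<le> N\<close> have "0 < A"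
      by (cases "K * n ^ e") (auto intro: Nat.gr0I)
    ultimately have "log 2 N \<le> log 2 (real A ^ (K * n ^ e))"
      using \<open>2 \<le> N\<close> by (intro log_mono) auto
    also have "\<dots> = real K * log 2 (real A) * real n ^ e"
      using \<open>0 < A\<close> by (simp add: log_nat_power)
    also have "\<dots> \<le> C * real n ^ e"
      by (intro mult_right_mono) (auto simp: C_def)
    finally have "log 2 (log 2 N) / log 2 n \<le> log 2 C / log 2 n + e"
      using \<open>2 \<le> N\<close> that by (intro log_log_div_log_le) (auto simp: C_def)
    then show ?thesis using False by (simp add: ent_dim_term_def N_def)
  qed
  then have "upper_entropy_dim X \<le> limsup (\<lambda>n. ereal (log 2 C / log 2 (real n) + real e))"
    unfolding upper_entropy_dim_def by (intro Limsup_mono) (auto simp: eventually_sequentially)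
  also have "\<dots> = ereal (real e)"
    by (intro lim_imp_Limsup tendsto_ereal) (simp_all, real_asymp)
  finally show ?thesis .
qed

theorem mainTheorem3:
  fixes X :: "('d::finite, 'a::finite) config set"
  assumes "is_SFT X" and "minimal_subshift X"
  shows "upper_entropy_dim X \<le> ereal (real (card (UNIV :: 'd set)) - 1)"
proof -
  obtain F where F: "finite F" "\<forall>P\<in>F. is_pattern P" and X: "X = {x. \<forall>P\<in>F. \<not> occurs_in P x}"
    using assms(1) unfolding is_SFT_def by blast
  have "finite (\<Union>P\<in>F. dom P)" using F by (auto simp: is_pattern_def)
  then obtain M :: nat where "(\<Union>P\<in>F. dom P) \<subseteq> lattice_box (\<lambda>_. 0) (int M)"
    by (rule finite_subset_lattice_box)
  with X assms(2) interpret minimal_sft_radius F "int M" X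
    by unfold_locales auto
  have "upper_entropy_dim X \<le> ereal (real (CARD('d) - 1))"
    by (rule upper_entropy_dim_le[OF N_count_le_exp])
  then show ?thesis by (simp add: of_nat_diff Suc_le_eq)
qed

end
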